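(* In the setting below, the image of $\rho\colon G\to A$ is a normal subgroup of $A$.
   Context: Let $G$ be a group generated by $a_1,\dots,a_n$ with $z=a_1\cdots a_n$ central. Let $S_1,\dots,S_m\subseteq\{1,\dots,n\}$ with $|S_i\cap S_r|\le1$ for $i\neq r$. For $S\subseteq\{1,\dots,n\}$ let $G_S$ be the quotient of $G$ by the normal closure of $\{a_j: j\notin S\}$; let $a_{ij}$ be the image of $a_j$ in $G_{S_i}$ (so $a_{ij}=1$ if $j\notin S_i$) and $z_i=a_{i1}\cdots a_{in}$, which is central in $G_{S_i}$. Let $\bar G=G/\langle z\rangle$, $\bar G_{S_i}=G_{S_i}/\langle z_i\rangle$, and assume each $\bar G_{S_i}$ is free of rank $|S_i|-1$, the images of any $|S_i|-1$ of the $a_{ij}$, $j\in S_i$, forming a free basis. Let $A=\prod_{i=1}^mG_{S_i}$, $\bar A=\prod_{i=1}^m\bar G_{S_i}$, $\rho\colon G\to A$ the product of the projections, and $\bar\rho\colon\bar G\to\bar A$ the induced homomorphism. *)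

theory Defs
  imports "HOL-Algebra.Algebra"
begin

definition normal_closure :: "('g, 'b) monoid_scheme \<Rightarrow> 'g set \<Rightarrow> 'g set" where
  "normal_closure G Y = generate G ((\<lambda>(g, x). g \<otimes>\<^bsub>G\<^esub> x \<otimes>\<^bsub>G\<^esub> inv\<^bsub>G\<^esub> g) ` (carrier G \<times> Y))"

definition gprod :: "('g, 'b) monoid_scheme \<Rightarrow> (nat \<Rightarrow> 'g) \<Rightarrow> nat \<Rightarrow> 'g" where
  "gprod G x n = foldr (\<lambda>j acc. x j \<otimes>\<^bsub>G\<^esub> acc) [1..<Suc n] \<one>\<^bsub>G\<^esub>"

definition eval_word :: "('g, 'b) monoid_scheme \<Rightarrow> ('i \<Rightarrow> 'g) \<Rightarrow> ('i \<times> bool) list \<Rightarrow> 'g" where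
  "eval_word H x w = foldr (\<lambda>(i,e) acc. (if e then x i else inv\<^bsub>H\<^esub> (x i)) \<otimes>\<^bsub>H\<^esub> acc) w \<one>\<^bsub>H\<^esub>"

fun reduced_word :: "('i \<times> bool) list \<Rightarrow> bool" where
  "reduced_word ((i,e) # (j,f) # w) = (\<not> (i = j \<and> e \<noteq> f) \<and> reduced_word ((j,f) # w))"
| "reduced_word _ = True"

definition free_basis :: "('g, 'b) monoid_scheme \<Rightarrow> ('i \<Rightarrow> 'g) \<Rightarrow> 'i set \<Rightarrow> bool" where
  "free_basis H x I \<longleftrightarrow> x ` I \<subseteq> carrier H \<and> generate H (x ` I) = carrier H \<and>
     (\<forall>w. w \<noteq> [] \<and> set (map fst w) \<subseteq> I \<and> reduced_word w \<longrightarrow> eval_word H x w \<noteq> \<one>\<^bsub>H\<^esub>)"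

definition kerS :: "('g, 'b) monoid_scheme \<Rightarrow> (nat \<Rightarrow> 'g) \<Rightarrow> nat \<Rightarrow> nat set \<Rightarrow> 'g set" where
  "kerS G a n S = normal_closure G (a ` ({1..n} - S))"

definition GS :: "('g, 'b) monoid_scheme \<Rightarrow> (nat \<Rightarrow> 'g) \<Rightarrow> nat \<Rightarrow> nat set \<Rightarrow> 'g set monoid" where
  "GS G a n S = G Mod kerS G a n S"

definition aS :: "('g, 'b) monoid_scheme \<Rightarrow> (nat \<Rightarrow> 'g) \<Rightarrow> nat \<Rightarrow> nat set \<Rightarrow> nat \<Rightarrow> 'g set" where
  "aS G a n S j = kerS G a n S #>\<^bsub>G\<^esub> a j"

definition zS :: "('g, 'b) monoid_scheme \<Rightarrow> (nat \<Rightarrow> 'g) \<Rightarrow> nat \<Rightarrow> nat set \<Rightarrow> 'g set" where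
  "zS G a n S = gprod (GS G a n S) (aS G a n S) n"

definition barGS :: "('g, 'b) monoid_scheme \<Rightarrow> (nat \<Rightarrow> 'g) \<Rightarrow> nat \<Rightarrow> nat set \<Rightarrow> 'g set set monoid" where
  "barGS G a n S = GS G a n S Mod generate (GS G a n S) {zS G a n S}"

definition bar_aS :: "('g, 'b) monoid_scheme \<Rightarrow> (nat \<Rightarrow> 'g) \<Rightarrow> nat \<Rightarrow> nat set \<Rightarrow> nat \<Rightarrow> 'g set set" where
  "bar_aS G a n S j = generate (GS G a n S) {zS G a n S} #>\<^bsub>GS G a n S\<^esub> aS G a n S j"

end

theory Submission
  imports Defs
begin

(* A subgroup containing all commutators is normal, so it suffices that the image H of rho
   contains the commutator subgroup of the finite product A.  That subgroup is generated by the
   commutators of each factor G_{S_i} placed in coordinate i, and the elements of G_{S_i} whose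
   copy in coordinate i lies in H form a normal subgroup of G_{S_i} (rho projects onto every
   factor).  Hence only commutators of generators a_k, a_l have to be checked: either they die in
   G_{S_i}, or k \<noteq> l both lie in S_i, and then |S_i \<inter> S_r| \<le> 1 kills [a_k, a_l] in every
   other factor, so rho [a_k, a_l] is concentrated in coordinate i. *)

context group begin

lemma inv_cancel_left:
  "x \<in> carrier G \<Longrightarrow> y \<in> carrier G \<Longrightarrow> inv x \<otimes> (x \<otimes> y) = y"
  by (simp add: m_assoc[symmetric])

lemma normal_closure_normal:
  assumes "Y \<subseteq> carrier G"
  shows "normal_closure G Y \<lhd> G"
  unfolding normal_closure_def
proof (rule normal_generateI)
  show "(\<lambda>(g, y). g \<otimes> y \<otimes> inv g) ` (carrier G \<times> Y) \<subseteq> carrier G"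
    using assms by auto
next
  fix h g
  assume "h \<in> (\<lambda>(g, y). g \<otimes> y \<otimes> inv g) ` (carrier G \<times> Y)" and g: "g \<in> carrier G"
  then obtain g' y where g': "g' \<in> carrier G" and y: "y \<in> Y" and h: "h = g' \<otimes> y \<otimes> inv g'"
    by auto
  have "g \<otimes> h \<otimes> inv g = (g \<otimes> g') \<otimes> y \<otimes> inv (g \<otimes> g')"
    using g g' y assms by (auto simp: h inv_mult_group m_assoc)
  then show "g \<otimes> h \<otimes> inv g \<in> (\<lambda>(g, y). g \<otimes> y \<otimes> inv g) ` (carrier G \<times> Y)"
    using g g' y by (auto intro!: image_eqI[where x = "(g \<otimes> g', y)"])
qed

lemma normal_closure_incl:
  assumes "Y \<subseteq> carrier G"
  shows "Y \<subseteq> normal_closure G Y"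
proof
  fix y assume y: "y \<in> Y"
  then have "y \<in> (\<lambda>(g, y). g \<otimes> y \<otimes> inv g) ` (carrier G \<times> Y)"
    using assms by (auto intro!: image_eqI[where x = "(\<one>, y)"])
  then show "y \<in> normal_closure G Y"
    unfolding normal_closure_def by (rule generate.incl)
qed

lemma subgroup_commutator_in_normal:
  assumes N: "N \<lhd> G" and u: "u \<in> carrier G"
  shows "subgroup {v \<in> carrier G. u \<otimes> v \<otimes> inv u \<otimes> inv v \<in> N} G" (is "subgroup ?Z G")
proof (rule subgroupI)
  interpret N: normal N G by (rule N)
  show "?Z \<noteq> {}"
    using u by (auto intro!: exI[of _ \<one>])
  fix v w
  assume v: "v \<in> ?Z"
  then have vG: "v \<in> carrier G" by simp
  have "u \<otimes> inv v \<otimes> inv u \<otimes> inv (inv v) = inv v \<otimes> inv (u \<otimes> v \<otimes> inv u \<otimes> inv v) \<otimes> v"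
    using u vG by (simp add: inv_mult_group m_assoc[symmetric])
  also have "\<dots> \<in> N"
    using v vG by (intro N.inv_op_closed1 subgroup.m_inv_closed[OF N.subgroup_axioms]) auto
  finally show "inv v \<in> ?Z"
    using vG by simp
  assume w: "w \<in> ?Z"
  then have wG: "w \<in> carrier G" by simp
  have "u \<otimes> (v \<otimes> w) \<otimes> inv u \<otimes> inv (v \<otimes> w)
      = (u \<otimes> v \<otimes> inv u \<otimes> inv v) \<otimes> (v \<otimes> (u \<otimes> w \<otimes> inv u \<otimes> inv w) \<otimes> inv v)"
    using u vG wG by (simp add: inv_mult_group m_assoc inv_cancel_left)
  also have "\<dots> \<in> N"
    using v w N.inv_op_closed2[OF vG] subgroup.m_closed[OF N.subgroup_axioms] by simp
  finally show "v \<otimes> w \<in> ?Z"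
    using vG wG by simp
qed blast

lemma derived_set_subset_normal_of_generators:
  assumes N: "N \<lhd> G" and Y: "Y \<subseteq> carrier G" and gen: "generate G Y = carrier G"
    and YN: "derived_set G Y \<subseteq> N"
  shows "derived_set G (carrier G) \<subseteq> N"
proof -
  have extend: "u \<otimes> v \<otimes> inv u \<otimes> inv v \<in> N"
    if u: "u \<in> carrier G" and v: "v \<in> carrier G"
      and base: "\<And>y. y \<in> Y \<Longrightarrow> u \<otimes> y \<otimes> inv u \<otimes> inv y \<in> N" for u v
  proof -
    have "Y \<subseteq> {v \<in> carrier G. u \<otimes> v \<otimes> inv u \<otimes> inv v \<in> N}"
      using Y base by auto
    then have "generate G Y \<subseteq> {v \<in> carrier G. u \<otimes> v \<otimes> inv u \<otimes> inv v \<in> N}"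
      by (rule generate_subgroup_incl[OF _ subgroup_commutator_in_normal[OF N u]])
    then show ?thesis
      using v gen by auto
  qed
  have Y_left: "x \<otimes> v \<otimes> inv x \<otimes> inv v \<in> N" if x: "x \<in> Y" and v: "v \<in> carrier G" for x v
  proof (rule extend[OF _ v])
    show "x \<in> carrier G"
      using x Y by blast
    show "x \<otimes> y \<otimes> inv x \<otimes> inv y \<in> N" if "y \<in> Y" for y
      using x that YN by auto
  qed
  have Y_right: "v \<otimes> x \<otimes> inv v \<otimes> inv x \<in> N" if x: "x \<in> Y" and v: "v \<in> carrier G" for x v
  proof -
    have xG: "x \<in> carrier G"
      using x Y by blast
    have "inv (x \<otimes> v \<otimes> inv x \<otimes> inv v) \<in> N"
      by (rule subgroup.m_inv_closed[OF normal_imp_subgroup[OF N] Y_left[OF x v]])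
    then show ?thesis
      using xG v by (simp add: inv_mult_group m_assoc)
  qed
  show ?thesis
  proof
    fix c assume "c \<in> derived_set G (carrier G)"
    then obtain u v where u: "u \<in> carrier G" and v: "v \<in> carrier G"
      and c: "c = u \<otimes> v \<otimes> inv u \<otimes> inv v"
      by blast
    show "c \<in> N"
      unfolding c using extend[OF u v Y_right[OF _ u]] .
  qed
qed

lemma derived_set_subset_imp_normal:
  assumes H: "subgroup H G" and derived: "derived_set G (carrier G) \<subseteq> H"
  shows "H \<lhd> G"
proof (rule normal_invI[OF H])
  fix x h assume x: "x \<in> carrier G" and h: "h \<in> H"
  have hG: "h \<in> carrier G" using h H subgroup.subset by blast
  have "x \<otimes> h \<otimes> inv x = (x \<otimes> h \<otimes> inv x \<otimes> inv h) \<otimes> h"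
    using x hG by (simp add: m_assoc)
  also have "\<dots> \<in> H"
    using derived x hG h subgroup.m_closed[OF H] by blast
  finally show "x \<otimes> h \<otimes> inv x \<in> H" .
qed

end

lemma (in normal) commutator_closed_left:
  assumes x: "x \<in> H" and y: "y \<in> carrier G"
  shows "x \<otimes> y \<otimes> inv x \<otimes> inv y \<in> H"
proof -
  have "y \<otimes> inv x \<otimes> inv y \<in> H"
    using y subgroup.m_inv_closed[OF subgroup_axioms x] by (rule inv_op_closed2)
  then have "x \<otimes> (y \<otimes> inv x \<otimes> inv y) \<in> H"
    using x subgroup.m_closed[OF subgroup_axioms] by blast
  then show ?thesis
    using x y by (simp add: m_assoc)
qed

lemma (in normal) commutator_closed_right:
  "x \<in> carrier G \<Longrightarrow> y \<in> H \<Longrightarrow> x \<otimes> y \<otimes> inv x \<otimes> inv y \<in> H"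
  by (simp add: inv_op_closed2)

definition product_inj :: "'i set \<Rightarrow> ('i \<Rightarrow> ('a, 'b) monoid_scheme) \<Rightarrow> 'i \<Rightarrow> 'a \<Rightarrow> 'i \<Rightarrow> 'a"
  where "product_inj I Q i u = (\<lambda>r\<in>I. if r = i then u else \<one>\<^bsub>Q r\<^esub>)"

definition product_slice ::
    "'i set \<Rightarrow> ('i \<Rightarrow> ('a, 'b) monoid_scheme) \<Rightarrow> ('i \<Rightarrow> 'a) set \<Rightarrow> 'i \<Rightarrow> 'a set"
  where "product_slice I Q H i = {u \<in> carrier (Q i). product_inj I Q i u \<in> H}"

lemma product_inj_hom:
  assumes grp: "\<And>i. i \<in> I \<Longrightarrow> group (Q i)" and i: "i \<in> I"
  shows "product_inj I Q i \<in> hom (Q i) (product_group I Q)"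
proof (rule homI)
  fix u v assume u: "u \<in> carrier (Q i)" and v: "v \<in> carrier (Q i)"
  show "product_inj I Q i u \<in> carrier (product_group I Q)"
    using u grp by (auto simp: product_inj_def group.is_monoid monoid.one_closed)
  show "product_inj I Q i (u \<otimes>\<^bsub>Q i\<^esub> v) = product_inj I Q i u \<otimes>\<^bsub>product_group I Q\<^esub> product_inj I Q i v"
    using grp by (auto simp: product_inj_def group.is_monoid monoid.l_one monoid.one_closed
        intro!: restrict_ext)
qed

lemma group_hom_product_inj:
  assumes "\<And>i. i \<in> I \<Longrightarrow> group (Q i)" and "i \<in> I"
  shows "group_hom (Q i) (product_group I Q) (product_inj I Q i)"
  using assms by (simp add: group_hom_def group_hom_axioms_def product_inj_hom)

lemma PiE_mem_subgroup_product_group: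
  assumes grp: "\<And>i. i \<in> I \<Longrightarrow> group (Q i)" and fin: "finite I"
    and H: "subgroup H (product_group I Q)"
    and c: "c \<in> (\<Pi>\<^sub>E i\<in>I. carrier (Q i))"
    and inj: "\<And>i. i \<in> I \<Longrightarrow> product_inj I Q i (c i) \<in> H"
  shows "c \<in> H"
proof -
  have "(\<lambda>r\<in>I. if r \<in> J then c r else \<one>\<^bsub>Q r\<^esub>) \<in> H" if "J \<subseteq> I" for J
    using finite_subset[OF that fin] that
  proof (induction J rule: finite_induct)
    case empty
    then show ?case
      using subgroup.one_closed[OF H] by (simp add: restrict_def)
  next
    case (insert j J)
    have split: "(\<lambda>r\<in>I. if r \<in> insert j J then c r else \<one>\<^bsub>Q r\<^esub>)
        = (\<lambda>r\<in>I. if r \<in> J then c r else \<one>\<^bsub>Q r\<^esub>) \<otimes>\<^bsub>product_group I Q\<^esub> product_inj I Q j (c j)"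
      using insert.hyps(2) insert.prems c grp
      by (auto simp: product_inj_def PiE_iff group.is_monoid monoid.l_one monoid.r_one
          intro!: restrict_ext)
    show ?case
      unfolding split using insert.IH insert.prems inj by (intro subgroup.m_closed[OF H]) blast+
  qed
  from this[of I] have "(\<lambda>r\<in>I. if r \<in> I then c r else \<one>\<^bsub>Q r\<^esub>) \<in> H"
    by simp
  moreover have "(\<lambda>r\<in>I. if r \<in> I then c r else \<one>\<^bsub>Q r\<^esub>) = c"
    using c by (auto simp: PiE_iff extensional_def)
  ultimately show ?thesis
    by simp
qed

lemma (in group_hom) subgroup_vimage:
  assumes "subgroup K H"
  shows "subgroup {x \<in> carrier G. h x \<in> K} G"
proof (rule G.subgroupI)
  show "{x \<in> carrier G. h x \<in> K} \<noteq> {}"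
    using assms subgroup.one_closed by force
qed (use assms in \<open>auto simp: subgroup.m_closed subgroup.m_inv_closed\<close>)

lemma normal_product_slice:
  assumes grp: "\<And>i. i \<in> I \<Longrightarrow> group (Q i)" and H: "subgroup H (product_group I Q)"
    and i: "i \<in> I" and onto: "(\<lambda>h. h i) ` H = carrier (Q i)"
  shows "product_slice I Q H i \<lhd> Q i"
proof -
  interpret inj: group_hom "Q i" "product_group I Q" "product_inj I Q i"
    using grp i by (rule group_hom_product_inj)
  show ?thesis
    unfolding product_slice_def
  proof (rule inj.G.normal_invI[OF inj.subgroup_vimage[OF H]])
    fix x u
    assume x: "x \<in> carrier (Q i)" and u: "u \<in> {u \<in> carrier (Q i). product_inj I Q i u \<in> H}"
    obtain p where p: "p \<in> H" and x_eq: "x = p i"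
      using x onto by auto
    have pP: "p \<in> carrier (product_group I Q)"
      using p H subgroup.subset by blast
    have "product_inj I Q i (x \<otimes>\<^bsub>Q i\<^esub> u \<otimes>\<^bsub>Q i\<^esub> inv\<^bsub>Q i\<^esub> x)
        = p \<otimes>\<^bsub>product_group I Q\<^esub> product_inj I Q i u \<otimes>\<^bsub>product_group I Q\<^esub> inv\<^bsub>product_group I Q\<^esub> p"
      using pP u grp by (auto simp: product_inj_def x_eq PiE_iff group.r_inv group.is_monoid
          monoid.r_one intro!: restrict_ext)
    also have "\<dots> \<in> H"
      using p u by (intro subgroup.m_closed[OF H] subgroup.m_inv_closed[OF H]) auto
    finally show "x \<otimes>\<^bsub>Q i\<^esub> u \<otimes>\<^bsub>Q i\<^esub> inv\<^bsub>Q i\<^esub> x \<in> {u \<in> carrier (Q i). product_inj I Q i u \<in> H}"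
      using x u by simp
  qed
qed

lemma derived_set_product_group_subset:
  assumes grp: "\<And>i. i \<in> I \<Longrightarrow> group (Q i)" and fin: "finite I"
    and H: "subgroup H (product_group I Q)"
    and slices: "\<And>i. i \<in> I \<Longrightarrow> derived_set (Q i) (carrier (Q i)) \<subseteq> product_slice I Q H i"
  shows "derived_set (product_group I Q) (carrier (product_group I Q)) \<subseteq> H"
proof clarify
  fix x y
  assume x: "x \<in> carrier (product_group I Q)" and y: "y \<in> carrier (product_group I Q)"
  let ?c = "\<lambda>i\<in>I. x i \<otimes>\<^bsub>Q i\<^esub> y i \<otimes>\<^bsub>Q i\<^esub> inv\<^bsub>Q i\<^esub> x i \<otimes>\<^bsub>Q i\<^esub> inv\<^bsub>Q i\<^esub> y i"
  have comm_closed: "a \<otimes>\<^bsub>Q i\<^esub> b \<otimes>\<^bsub>Q i\<^esub> inv\<^bsub>Q i\<^esub> a \<otimes>\<^bsub>Q i\<^esub> inv\<^bsub>Q i\<^esub> b \<in> carrier (Q i)"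
    if "i \<in> I" "a \<in> carrier (Q i)" "b \<in> carrier (Q i)" for i a b
  proof -
    interpret Qi: group "Q i" using grp that(1) .
    show ?thesis using that by simp
  qed
  have c_in_H: "?c \<in> H"
  proof (rule PiE_mem_subgroup_product_group[OF grp fin H])
    show "?c \<in> (\<Pi>\<^sub>E i\<in>I. carrier (Q i))"
      using x y by (auto intro: comm_closed)
    show "product_inj I Q i (?c i) \<in> H" if "i \<in> I" for i
    proof -
      have "x i \<in> carrier (Q i)" "y i \<in> carrier (Q i)"
        using x y that by auto
      then have "?c i \<in> derived_set (Q i) (carrier (Q i))"
        using that by auto
      then have "?c i \<in> product_slice I Q H i"
        by (rule subsetD[OF slices[OF that]])
      then show ?thesis
        by (simp add: product_slice_def)
    qed
  qed
  have commutator: "x \<otimes>\<^bsub>product_group I Q\<^esub> y \<otimes>\<^bsub>product_group I Q\<^esub> inv\<^bsub>product_group I Q\<^esub> x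
      \<otimes>\<^bsub>product_group I Q\<^esub> inv\<^bsub>product_group I Q\<^esub> y = ?c"
    using x y grp by (simp cong: restrict_cong)
  show "x \<otimes>\<^bsub>product_group I Q\<^esub> y \<otimes>\<^bsub>product_group I Q\<^esub> inv\<^bsub>product_group I Q\<^esub> x
      \<otimes>\<^bsub>product_group I Q\<^esub> inv\<^bsub>product_group I Q\<^esub> y \<in> H"
    unfolding commutator by (rule c_in_H)
qed

lemma hom_product_group:
  assumes "\<And>i. i \<in> I \<Longrightarrow> f i \<in> hom G (Q i)"
  shows "(\<lambda>g. \<lambda>i\<in>I. f i g) \<in> hom G (product_group I Q)"
proof (rule homI)
  fix x y assume x: "x \<in> carrier G" and y: "y \<in> carrier G"
  show "(\<lambda>i\<in>I. f i x) \<in> carrier (product_group I Q)"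
    using assms x by (auto intro: hom_in_carrier)
  show "(\<lambda>i\<in>I. f i (x \<otimes>\<^bsub>G\<^esub> y)) = (\<lambda>i\<in>I. f i x) \<otimes>\<^bsub>product_group I Q\<^esub> (\<lambda>i\<in>I. f i y)"
    using assms x y by (auto simp: hom_mult intro!: restrict_ext)
qed

lemma product_inj_coset_in_image:
  assumes G: "group G" and K: "\<And>i. i \<in> I \<Longrightarrow> K i \<lhd> G" and i: "i \<in> I"
    and c: "c \<in> carrier G" and cK: "c \<in> K i \<or> (\<forall>r \<in> I - {i}. c \<in> K r)"
  shows "product_inj I (\<lambda>i. G Mod K i) i (K i #>\<^bsub>G\<^esub> c) \<in> (\<lambda>g. \<lambda>i\<in>I. K i #>\<^bsub>G\<^esub> g) ` carrier G"
proof -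
  interpret G: group G by (rule G)
  have coset_c: "K r #>\<^bsub>G\<^esub> c = K r" if "r \<in> I" "c \<in> K r" for r
    using G.coset_join2[OF c normal_imp_subgroup[OF K[OF that(1)]] that(2)] .
  from cK show ?thesis
  proof
    assume "c \<in> K i"
    then have "product_inj I (\<lambda>i. G Mod K i) i (K i #>\<^bsub>G\<^esub> c) = (\<lambda>r\<in>I. K r #>\<^bsub>G\<^esub> \<one>\<^bsub>G\<^esub>)"
      unfolding product_inj_def using coset_c i K
      by (intro restrict_ext) (simp add: G.coset_mult_one normal_imp_subgroup subgroup.subset)
    then show ?thesis
      using G.one_closed by blast
  next
    assume "\<forall>r \<in> I - {i}. c \<in> K r"
    then have "product_inj I (\<lambda>i. G Mod K i) i (K i #>\<^bsub>G\<^esub> c) = (\<lambda>r\<in>I. K r #>\<^bsub>G\<^esub> c)"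
      unfolding product_inj_def using coset_c by (intro restrict_ext) simp
    then show ?thesis
      using c by blast
  qed
qed

lemma subgroup_image_product_quotients:
  assumes G: "group G" and K: "\<And>i. i \<in> I \<Longrightarrow> K i \<lhd> G"
  shows "subgroup ((\<lambda>g. \<lambda>i\<in>I. K i #>\<^bsub>G\<^esub> g) ` carrier G) (product_group I (\<lambda>i. G Mod K i))"
proof -
  have "group_hom G (product_group I (\<lambda>i. G Mod K i)) (\<lambda>g. \<lambda>i\<in>I. K i #>\<^bsub>G\<^esub> g)"
    using G K by (simp add: group_hom_def group_hom_axioms_def hom_product_group
        normal.factorgroup_is_group normal.r_coset_hom_Mod)
  then show ?thesis
    by (rule group_hom.img_is_subgroup)
qed

lemma derived_set_quotient_subset_product_slice:
  assumes G: "group G" and K: "\<And>i. i \<in> I \<Longrightarrow> K i \<lhd> G" and i: "i \<in> I"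
    and Y: "Y \<subseteq> carrier G" and gen: "generate G Y = carrier G"
    and comm: "\<And>x y. \<lbrakk>x \<in> Y; y \<in> Y\<rbrakk> \<Longrightarrow>
        x \<otimes>\<^bsub>G\<^esub> y \<otimes>\<^bsub>G\<^esub> inv\<^bsub>G\<^esub> x \<otimes>\<^bsub>G\<^esub> inv\<^bsub>G\<^esub> y \<in> K i \<or>
        (\<forall>r \<in> I - {i}. x \<otimes>\<^bsub>G\<^esub> y \<otimes>\<^bsub>G\<^esub> inv\<^bsub>G\<^esub> x \<otimes>\<^bsub>G\<^esub> inv\<^bsub>G\<^esub> y \<in> K r)"
  shows "derived_set (G Mod K i) (carrier (G Mod K i))
    \<subseteq> product_slice I (\<lambda>i. G Mod K i) ((\<lambda>g. \<lambda>i\<in>I. K i #>\<^bsub>G\<^esub> g) ` carrier G) i"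
    (is "_ \<subseteq> ?slice")
proof (rule group.derived_set_subset_normal_of_generators)
  interpret \<pi>: group_hom G "G Mod K i" "\<lambda>g. K i #>\<^bsub>G\<^esub> g"
    using G K[OF i] by (simp add: group_hom_def group_hom_axioms_def
        normal.factorgroup_is_group normal.r_coset_hom_Mod)
  show "group (G Mod K i)"
    by (rule \<pi>.H.is_group)
  show "?slice \<lhd> G Mod K i"
    using G K i by (intro normal_product_slice subgroup_image_product_quotients)
      (simp_all add: normal.factorgroup_is_group image_image carrier_FactGroup)
  show "(\<lambda>g. K i #>\<^bsub>G\<^esub> g) ` Y \<subseteq> carrier (G Mod K i)"
    using Y by auto
  show "generate (G Mod K i) ((\<lambda>g. K i #>\<^bsub>G\<^esub> g) ` Y) = carrier (G Mod K i)"
    using Y gen by (simp add: \<pi>.generate_img carrier_FactGroup)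
  show "derived_set (G Mod K i) ((\<lambda>g. K i #>\<^bsub>G\<^esub> g) ` Y) \<subseteq> ?slice"
  proof
    fix d assume "d \<in> derived_set (G Mod K i) ((\<lambda>g. K i #>\<^bsub>G\<^esub> g) ` Y)"
    then obtain x y where x: "x \<in> Y" and y: "y \<in> Y" and d: "d = (K i #>\<^bsub>G\<^esub> x) \<otimes>\<^bsub>G Mod K i\<^esub>
        (K i #>\<^bsub>G\<^esub> y) \<otimes>\<^bsub>G Mod K i\<^esub> inv\<^bsub>G Mod K i\<^esub> (K i #>\<^bsub>G\<^esub> x) \<otimes>\<^bsub>G Mod K i\<^esub>
        inv\<^bsub>G Mod K i\<^esub> (K i #>\<^bsub>G\<^esub> y)"
      by blast
    have xG: "x \<in> carrier G" and yG: "y \<in> carrier G"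
      using x y Y by auto
    define c where "c = x \<otimes>\<^bsub>G\<^esub> y \<otimes>\<^bsub>G\<^esub> inv\<^bsub>G\<^esub> x \<otimes>\<^bsub>G\<^esub> inv\<^bsub>G\<^esub> y"
    have cG: "c \<in> carrier G"
      using xG yG by (simp add: c_def)
    have "d = K i #>\<^bsub>G\<^esub> c"
      using xG yG by (simp add: d c_def \<pi>.hom_mult \<pi>.hom_inv del: mult_FactGroup)
    then show "d \<in> ?slice"
      using product_inj_coset_in_image[OF G K i cG comm[OF x y, folded c_def]] \<pi>.hom_closed[OF cG]
      by (simp add: product_slice_def)
  qed
qed

theorem normal_image_product_quotients:
  assumes G: "group G" and fin: "finite I" and K: "\<And>i. i \<in> I \<Longrightarrow> K i \<lhd> G"
    and Y: "Y \<subseteq> carrier G" and gen: "generate G Y = carrier G"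
    and comm: "\<And>i x y. \<lbrakk>i \<in> I; x \<in> Y; y \<in> Y\<rbrakk> \<Longrightarrow>
        x \<otimes>\<^bsub>G\<^esub> y \<otimes>\<^bsub>G\<^esub> inv\<^bsub>G\<^esub> x \<otimes>\<^bsub>G\<^esub> inv\<^bsub>G\<^esub> y \<in> K i \<or>
        (\<forall>r \<in> I - {i}. x \<otimes>\<^bsub>G\<^esub> y \<otimes>\<^bsub>G\<^esub> inv\<^bsub>G\<^esub> x \<otimes>\<^bsub>G\<^esub> inv\<^bsub>G\<^esub> y \<in> K r)"
  shows "(\<lambda>g. \<lambda>i\<in>I. K i #>\<^bsub>G\<^esub> g) ` carrier G \<lhd> product_group I (\<lambda>i. G Mod K i)"
proof (rule group.derived_set_subset_imp_normal)
  have Q: "\<And>i. i \<in> I \<Longrightarrow> group (G Mod K i)"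
    using K by (rule normal.factorgroup_is_group)
  then show "group (product_group I (\<lambda>i. G Mod K i))"
    by simp
  show H: "subgroup ((\<lambda>g. \<lambda>i\<in>I. K i #>\<^bsub>G\<^esub> g) ` carrier G) (product_group I (\<lambda>i. G Mod K i))"
    using G K by (rule subgroup_image_product_quotients)
  show "derived_set (product_group I (\<lambda>i. G Mod K i)) (carrier (product_group I (\<lambda>i. G Mod K i)))
      \<subseteq> (\<lambda>g. \<lambda>i\<in>I. K i #>\<^bsub>G\<^esub> g) ` carrier G"
  proof (rule derived_set_product_group_subset[OF Q fin H])
    fix i assume i: "i \<in> I"
    show "derived_set (G Mod K i) (carrier (G Mod K i))
        \<subseteq> product_slice I (\<lambda>i. G Mod K i) ((\<lambda>g. \<lambda>i\<in>I. K i #>\<^bsub>G\<^esub> g) ` carrier G) i"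
      by (rule derived_set_quotient_subset_product_slice[OF G K i Y gen comm[OF i]])
  qed
qed

lemma kerS_normal:
  assumes "group G" and "a ` {1..n} \<subseteq> carrier G"
  shows "kerS G a n S \<lhd> G"
  unfolding kerS_def using assms by (intro group.normal_closure_normal) auto

lemma generator_in_kerS:
  assumes "group G" and "a ` {1..n} \<subseteq> carrier G" and "k \<in> {1..n}" and "k \<notin> S"
  shows "a k \<in> kerS G a n S"
  unfolding kerS_def using assms by (intro subsetD[OF group.normal_closure_incl]) auto

lemma commutator_in_kerS:
  assumes grp: "group G" and a_carr: "a ` {1..n} \<subseteq> carrier G"
    and k: "k \<in> {1..n}" and l: "l \<in> {1..n}" and kl: "k \<notin> T \<or> l \<notin> T"
  shows "a k \<otimes>\<^bsub>G\<^esub> a l \<otimes>\<^bsub>G\<^esub> inv\<^bsub>G\<^esub> a k \<otimes>\<^bsub>G\<^esub> inv\<^bsub>G\<^esub> a l \<in> kerS G a n T"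
  using kl
proof
  assume "k \<notin> T"
  with grp a_carr k l show ?thesis
    by (intro normal.commutator_closed_left[OF kerS_normal] generator_in_kerS) auto
next
  assume "l \<notin> T"
  with grp a_carr k l show ?thesis
    by (intro normal.commutator_closed_right[OF kerS_normal] generator_in_kerS) auto
qed

lemma commutator_generators_in_kerS:
  assumes grp: "group G" and a_carr: "a ` {1..n} \<subseteq> carrier G"
    and S_sub: "\<forall>i\<in>{1..m}. S i \<subseteq> {1..n}"
    and S_int: "\<forall>i\<in>{1..m}. \<forall>r\<in>{1..m}. i \<noteq> r \<longrightarrow> card (S i \<inter> S r) \<le> 1"
    and i: "i \<in> {1..m}" and k: "k \<in> {1..n}" and l: "l \<in> {1..n}"
  shows "a k \<otimes>\<^bsub>G\<^esub> a l \<otimes>\<^bsub>G\<^esub> inv\<^bsub>G\<^esub> a k \<otimes>\<^bsub>G\<^esub> inv\<^bsub>G\<^esub> a l \<in> kerS G a n (S i) \<or>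
      (\<forall>r \<in> {1..m} - {i}. a k \<otimes>\<^bsub>G\<^esub> a l \<otimes>\<^bsub>G\<^esub> inv\<^bsub>G\<^esub> a k \<otimes>\<^bsub>G\<^esub> inv\<^bsub>G\<^esub> a l \<in> kerS G a n (S r))"
proof -
  interpret G: group G by (rule grp)
  have ak: "a k \<in> carrier G"
    using a_carr k by auto
  note in_ker = commutator_in_kerS[OF grp a_carr k l]
  consider "k \<notin> S i \<or> l \<notin> S i" | "k = l" | "k \<in> S i" "l \<in> S i" "k \<noteq> l"
    by blast
  then show ?thesis
  proof cases
    case 1
    then show ?thesis
      using in_ker by blast
  next
    case 2
    have "a k \<otimes>\<^bsub>G\<^esub> a k \<otimes>\<^bsub>G\<^esub> inv\<^bsub>G\<^esub> a k \<otimes>\<^bsub>G\<^esub> inv\<^bsub>G\<^esub> a k = \<one>\<^bsub>G\<^esub>"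
      using ak by (simp add: G.m_assoc[of "a k" "a k" "inv\<^bsub>G\<^esub> a k"])
    then show ?thesis
      using 2 subgroup.one_closed[OF normal_imp_subgroup[OF kerS_normal[OF grp a_carr]]] by simp
  next
    case 3
    have "k \<notin> S r \<or> l \<notin> S r" if r: "r \<in> {1..m} - {i}" for r
    proof -
      have "finite (S i \<inter> S r)"
        using S_sub i finite_subset by blast
      moreover have "card (S i \<inter> S r) \<le> Suc 0"
        using S_int i r by auto
      ultimately show ?thesis
        using 3 by (auto simp: card_le_Suc0_iff_eq)
    qed
    then show ?thesis
      using in_ker by blast
  qed
qed

theorem mainTheorem11:
  fixes G :: "('g, 'b) monoid_scheme" and a :: "nat \<Rightarrow> 'g" and n m :: nat
    and S :: "nat \<Rightarrow> nat set"
  assumes grp: "group G"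
    and a_carr: "a ` {1..n} \<subseteq> carrier G"
    and gen: "generate G (a ` {1..n}) = carrier G"
    and central: "\<forall>g\<in>carrier G. gprod G a n \<otimes>\<^bsub>G\<^esub> g = g \<otimes>\<^bsub>G\<^esub> gprod G a n"
    and S_sub: "\<forall>i\<in>{1..m}. S i \<subseteq> {1..n}"
    and S_int: "\<forall>i\<in>{1..m}. \<forall>r\<in>{1..m}. i \<noteq> r \<longrightarrow> card (S i \<inter> S r) \<le> 1"
    and S_ne: "\<forall>i\<in>{1..m}. S i \<noteq> {}"
    and free: "\<forall>i\<in>{1..m}. \<forall>j0\<in>S i.
                 free_basis (barGS G a n (S i)) (bar_aS G a n (S i)) (S i - {j0})"
  shows "(\<lambda>g. \<lambda>i\<in>{1..m}. kerS G a n (S i) #>\<^bsub>G\<^esub> g) ` carrier G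
           \<lhd> product_group {1..m} (\<lambda>i. GS G a n (S i))"
  unfolding GS_def
proof (rule normal_image_product_quotients[OF grp _ kerS_normal[OF grp a_carr] a_carr gen])
  fix i x y
  assume "i \<in> {1..m}" "x \<in> a ` {1..n}" "y \<in> a ` {1..n}"
  then show "x \<otimes>\<^bsub>G\<^esub> y \<otimes>\<^bsub>G\<^esub> inv\<^bsub>G\<^esub> x \<otimes>\<^bsub>G\<^esub> inv\<^bsub>G\<^esub> y \<in> kerS G a n (S i) \<or>
      (\<forall>r \<in> {1..m} - {i}. x \<otimes>\<^bsub>G\<^esub> y \<otimes>\<^bsub>G\<^esub> inv\<^bsub>G\<^esub> x \<otimes>\<^bsub>G\<^esub> inv\<^bsub>G\<^esub> y \<in> kerS G a n (S r))"
    using commutator_generators_in_kerS[OF grp a_carr S_sub S_int] by blast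
qed simp

end
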